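(* Let $M=p_1^{n_1}\cdots p_K^{n_K}$ with distinct primes and $n_\nu\in\mathbb{N}$, let $A\oplus B=\mathbb{Z}_M$, and fix $i$. Assume $0\in B$, and that there is $a_0\in A$ such that for every $a\in A\cap\Pi(a_0,p_i^{n_i-1})$ the fiber $a*F_i$ splits with parity $(B,A)$. Then for every $\nu\in\{1,\dots,p_i-1\}$, $$|A\cap\Pi(a_0,p_i^{n_i})|=|A\cap\Pi(a_0+\nu M/p_i,p_i^{n_i})|.$$ Consequently, $\Phi_{p_i^{n_i}}$ divides the mask polynomial of $A\cap\Pi(a_0,p_i^{n_i-1})$.
   Context: $A\oplus B=\mathbb{Z}_M$ means every element of $\mathbb{Z}_M$ is uniquely $a+b$ with $a\in A$, $b\in B$. The mask polynomial of $Y\subset\mathbb{Z}_M$ (viewed in $\{0,\dots,M-1\}$) is $Y(X)=\sum_{y\in Y}X^y$; $\Phi_s$ is the $s$-th cyclotomic polynomial. $\Pi(y,p_i^\alpha)=\{y'\in\mathbb{Z}_M:p_i^\alpha\mid y-y'\}$. $F_i=\{0,M/p_i,\dots,(p_i-1)M/p_i\}$, $x*F_i=\{x+f:f\in F_i\}$. For $Z\subset\mathbb{Z}_M$, $\Sigma_A(Z)=\{a\in A: a+b\in Z\text{ for some }b\in B\}$, $\Sigma_B(Z)=\{b\in B: a+b\in Z\text{ for some }a\in A\}$. A fiber $Z=x*F_i$ splits with parity $(B,A)$ if $p_i^{n_i}\mid b-b'$ for all $b,b'\in\Sigma_B(Z)$ and, for all distinct $a,a'\in\Sigma_A(Z)$,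 $p_i^{n_i-1}\mid a-a'$ but $p_i^{n_i}\nmid a-a'$. *)

theory Defs
  imports "HOL-Analysis.Analysis" "HOL-Computational_Algebra.Polynomial"
begin

text \<open>Z_M is represented by the natural numbers 0..M-1, with addition modulo M.\<close>

definition tiling :: "nat \<Rightarrow> nat set \<Rightarrow> nat set \<Rightarrow> bool" where
  "tiling M A B \<longleftrightarrow> A \<subseteq> {..<M} \<and> B \<subseteq> {..<M} \<and>
     (\<forall>x<M. \<exists>!ab. ab \<in> A \<times> B \<and> (fst ab + snd ab) mod M = x)"

definition Pi_set :: "nat \<Rightarrow> nat \<Rightarrow> nat \<Rightarrow> nat set" where
  "Pi_set M y q = {y' \<in> {..<M}. int q dvd (int y - int y')}"

definition fiber :: "nat \<Rightarrow> nat \<Rightarrow> nat \<Rightarrow> nat set" where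
  "fiber M p x = {(x + k * (M div p)) mod M | k. k < p}"

definition SigmaA :: "nat \<Rightarrow> nat set \<Rightarrow> nat set \<Rightarrow> nat set \<Rightarrow> nat set" where
  "SigmaA M A B Z = {a \<in> A. \<exists>b\<in>B. (a + b) mod M \<in> Z}"

definition SigmaB :: "nat \<Rightarrow> nat set \<Rightarrow> nat set \<Rightarrow> nat set \<Rightarrow> nat set" where
  "SigmaB M A B Z = {b \<in> B. \<exists>a\<in>A. (a + b) mod M \<in> Z}"

definition splits_BA :: "nat \<Rightarrow> nat set \<Rightarrow> nat set \<Rightarrow> nat \<Rightarrow> nat \<Rightarrow> nat set \<Rightarrow> bool" where
  "splits_BA M A B p n Z \<longleftrightarrow>
     (\<forall>b\<in>SigmaB M A B Z. \<forall>b'\<in>SigmaB M A B Z. int (p ^ n) dvd (int b - int b')) \<and>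
     (\<forall>a\<in>SigmaA M A B Z. \<forall>a'\<in>SigmaA M A B Z. a \<noteq> a' \<longrightarrow>
        int (p ^ (n - 1)) dvd (int a - int a') \<and> \<not> int (p ^ n) dvd (int a - int a'))"

definition mask_poly :: "nat set \<Rightarrow> complex poly" where
  "mask_poly Y = (\<Sum>y\<in>Y. monom 1 y)"

definition cyclotomic :: "nat \<Rightarrow> complex poly" where
  "cyclotomic s = (\<Prod>k\<in>{k. k < s \<and> coprime k s}. [:- cis (2 * pi * real k / real s), 1:])"

end

(* Write N = p^n with n the multiplicity of p in M, D = M div p, and
   T j = A \<inter> Pi(a0 + j D, N).  For a in T j the fiber a * F_p contains a + 0 with
   0 in B, so splitting with parity (B,A) forces every b in Sigma_B(a * F_p) to be
   divisible by N; only this half of the splitting hypothesis is used.  Decomposing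
   a + D = a' + b in the tiling therefore puts a' into T (j + 1), and a |-> a' is
   injective by uniqueness of the decomposition.  Hence
   |T 0| <= |T 1| <= ... <= |T p| = |T 0|.
   The classes T 0, ..., T (p - 1) partition A \<inter> Pi(a0, N/p), so at a primitive
   N-th root of unity z the mask polynomial equals |T 0| z^a0 (sum over j < p of w^j)
   with w = z^D a nontrivial p-th root of unity, which vanishes. *)

theory Submission
  imports Defs "HOL-Number_Theory.Cong"
begin

lemma mem_Pi_set_iff: "y \<in> Pi_set M x q \<longleftrightarrow> y < M \<and> [y = x] (mod q)"
  by (auto simp: Pi_set_def cong_sym_eq cong_int_iff [symmetric] cong_iff_dvd_diff)

lemma Pi_set_cong:
  "[x = x'] (mod q) \<Longrightarrow> Pi_set M x q = Pi_set M x' q"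
  by (auto simp: mem_Pi_set_iff) (metis cong_sym cong_trans)+

lemma Pi_set_mod:
  "q dvd M \<Longrightarrow> Pi_set M (x mod M) q = Pi_set M x q"
  by (rule Pi_set_cong) (metis cong_dvd_modulus_nat cong_mod_left cong_refl)

lemma Pi_set_subset:
  "q dvd N \<Longrightarrow> [x = x'] (mod q) \<Longrightarrow> Pi_set M x N \<subseteq> Pi_set M x' q"
  by (auto simp: mem_Pi_set_iff intro: cong_trans[OF cong_dvd_modulus_nat])

lemma finite_Pi_set [simp]: "finite (Pi_set M x q)"
  by (simp add: Pi_set_def)

lemma tiling_subset:
  assumes "tiling M A B"
  shows "A \<subseteq> {..<M}" "B \<subseteq> {..<M}"
  using assms by (simp_all add: tiling_def)

lemma tiling_ex1:
  assumes "tiling M A B" "x < M"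
  shows "\<exists>!ab. ab \<in> A \<times> B \<and> (fst ab + snd ab) mod M = x"
  using assms unfolding tiling_def by (elim conjE allE impE)

lemma tiling_decompose:
  assumes "tiling M A B" "M > 0"
  obtains a b where "a \<in> A" "b \<in> B" "[a + b = x] (mod M)"
proof -
  obtain ab where "ab \<in> A \<times> B" "(fst ab + snd ab) mod M = x mod M"
    using tiling_ex1[OF assms(1), of "x mod M"] assms(2) by auto
  then show thesis
    using that by (auto simp: cong_def)
qed

lemma tiling_unique:
  assumes "tiling M A B" "a \<in> A" "a' \<in> A" "b \<in> B" "b' \<in> B" "[a + b = a' + b'] (mod M)"
  shows "a = a' \<and> b = b'"
proof -
  have "a < M" using tiling_subset(1)[OF assms(1)] assms(2) by blast
  then have "\<exists>!ab. ab \<in> A \<times> B \<and> (fst ab + snd ab) mod M = (a + b) mod M"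
    using tiling_ex1[OF assms(1)] by simp
  moreover have "(a', b') \<in> A \<times> B \<and> (fst (a', b') + snd (a', b')) mod M = (a + b) mod M"
    using assms(3,5,6) by (simp add: cong_def)
  moreover have "(a, b) \<in> A \<times> B \<and> (fst (a, b) + snd (a, b)) mod M = (a + b) mod M"
    using assms(2,4) by simp
  ultimately have "(a, b) = (a', b')"
    by blast
  then show ?thesis by simp
qed

lemma tiling_card_le_translate:
  assumes tile: "tiling M A B" and "X \<subseteq> A" "finite Y"
    and into_Y: "\<And>a a' b. a \<in> X \<Longrightarrow> a' \<in> A \<Longrightarrow> b \<in> B \<Longrightarrow> [a' + b = a + t] (mod M) \<Longrightarrow> a' \<in> Y"
  shows "card X \<le> card Y"
proof -
  have "\<exists>a' \<in> A. \<exists>b \<in> B. [a' + b = a + t] (mod M)" if "a \<in> X" for a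
  proof -
    have "M > 0" using that \<open>X \<subseteq> A\<close> tiling_subset(1)[OF tile] by fastforce
    then show ?thesis using tile by (metis tiling_decompose)
  qed
  then obtain g b where g: "\<And>a. a \<in> X \<Longrightarrow> g a \<in> A \<and> b a \<in> B \<and> [g a + b a = a + t] (mod M)"
    by metis
  have "inj_on g X"
  proof (rule inj_onI)
    fix a1 a2 assume a12: "a1 \<in> X" "a2 \<in> X" "g a1 = g a2"
    have "[a1 + b a2 + t = a2 + b a1 + t] (mod M)"
    proof -
      have "[a1 + t + b a2 = g a1 + b a1 + b a2] (mod M)"
        using g[OF a12(1)] by (metis cong_add_rcancel_nat cong_sym)
      also have "g a1 + b a1 + b a2 = g a2 + b a2 + b a1" using a12(3) by simp
      also have "[\<dots> = a2 + t + b a1] (mod M)"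
        using g[OF a12(2)] by (metis cong_add_rcancel_nat)
      finally show ?thesis by (simp add: ac_simps)
    qed
    then have "[a1 + b a2 = a2 + b a1] (mod M)" by (simp add: cong_add_rcancel_nat)
    then show "a1 = a2"
      using tiling_unique[OF tile] g a12 \<open>X \<subseteq> A\<close> by blast
  qed
  moreover have "g ` X \<subseteq> Y" using g into_Y by blast
  ultimately show ?thesis by (meson card_inj_on_le \<open>finite Y\<close>)
qed

lemma mem_fiber: "k < p \<Longrightarrow> (x + k * (M div p)) mod M \<in> fiber M p x"
  by (auto simp: fiber_def)

lemma splits_BA_SigmaB_dvd:
  assumes "splits_BA M A B p n (fiber M p a)" "a \<in> A" "a < M" "0 < p" "0 \<in> B"
    and "b \<in> SigmaB M A B (fiber M p a)"
  shows "p ^ n dvd b"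
proof -
  have "(a + 0) mod M \<in> fiber M p a"
    using mem_fiber[of 0 p a M] \<open>0 < p\<close> by simp
  then have "0 \<in> SigmaB M A B (fiber M p a)"
    using \<open>a \<in> A\<close> \<open>0 \<in> B\<close> by (auto simp: SigmaB_def)
  then have "int (p ^ n) dvd int b - int 0"
    using assms(1,6) unfolding splits_BA_def by blast
  then show ?thesis by (metis diff_zero of_nat_0 of_nat_dvd_iff)
qed

lemma card_Pi_set_le_shift:
  assumes tile: "tiling M A B" and "0 \<in> B" "1 < p" "p ^ n dvd M"
    and split: "\<forall>a \<in> A \<inter> Pi_set M x (p ^ n). splits_BA M A B p n (fiber M p a)"
  shows "card (A \<inter> Pi_set M x (p ^ n)) \<le> card (A \<inter> Pi_set M (x + M div p) (p ^ n))"
proof (rule tiling_card_le_translate[OF tile, where t = "M div p"])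
  fix a a' b
  assume a: "a \<in> A \<inter> Pi_set M x (p ^ n)" and "a' \<in> A" "b \<in> B"
    and decomp: "[a' + b = a + M div p] (mod M)"
  have "a < M" "a' < M" using a \<open>a' \<in> A\<close> tiling_subset(1)[OF tile] by auto
  have "(a' + b) mod M \<in> fiber M p a"
    using mem_fiber[of 1 p a M] \<open>1 < p\<close> decomp by (simp add: cong_def)
  then have "b \<in> SigmaB M A B (fiber M p a)"
    using \<open>a' \<in> A\<close> \<open>b \<in> B\<close> by (auto simp: SigmaB_def)
  moreover have "splits_BA M A B p n (fiber M p a)" using split a by blast
  ultimately have "[b = 0] (mod p ^ n)"
    using splits_BA_SigmaB_dvd a \<open>a < M\<close> \<open>1 < p\<close> \<open>0 \<in> B\<close> by (simp add: cong_0_iff)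
  then have "[a' = a' + b] (mod p ^ n)"
    using cong_add_lcancel_nat[of a' 0 b] by (simp add: cong_sym_eq)
  also have "[a' + b = a + M div p] (mod p ^ n)"
    using decomp \<open>p ^ n dvd M\<close> by (rule cong_dvd_modulus_nat)
  also have "[a + M div p = x + M div p] (mod p ^ n)"
    using a by (simp add: mem_Pi_set_iff cong_add_rcancel_nat)
  finally show "a' \<in> A \<inter> Pi_set M (x + M div p) (p ^ n)"
    using \<open>a' \<in> A\<close> \<open>a' < M\<close> by (simp add: mem_Pi_set_iff)
qed auto

lemma card_Pi_set_shift_eq:
  assumes "tiling M A B" "0 \<in> B" "1 < p" "p dvd M" "p ^ n dvd M"
    and split: "\<And>j. \<forall>a \<in> A \<inter> Pi_set M (x + j * (M div p)) (p ^ n). splits_BA M A B p n (fiber M p a)"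
    and "j \<le> p"
  shows "card (A \<inter> Pi_set M (x + j * (M div p)) (p ^ n)) = card (A \<inter> Pi_set M x (p ^ n))"
proof -
  define c where "c j = card (A \<inter> Pi_set M (x + j * (M div p)) (p ^ n))" for j
  have step: "c j \<le> c (Suc j)" for j
    using card_Pi_set_le_shift[OF assms(1-3,5) split[of j]] by (simp add: c_def ac_simps)
  have "[x + p * (M div p) = x] (mod p ^ n)"
    using assms(4,5) by (auto simp: cong_def elim!: dvdE)
  then have "c p = c 0"
    by (simp add: c_def Pi_set_cong)
  moreover have "c 0 \<le> c j" "c j \<le> c p"
    using lift_Suc_mono_le[of c, OF step] \<open>j \<le> p\<close> by simp_all
  ultimately show ?thesis
    by (simp add: c_def)
qed

lemma Pi_set_refinement_subset: "Pi_set M (x + j * (q * m)) (q * p) \<subseteq> Pi_set M x q"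
  by (rule Pi_set_subset) (simp_all add: cong_def mult.left_commute[of _ q])

lemma Pi_set_eq_UN_refinement:
  assumes "0 < p" "coprime p m"
  shows "Pi_set M x q = (\<Union>j<p. Pi_set M (x + j * (q * m)) (q * p))"
proof
  show "(\<Union>j<p. Pi_set M (x + j * (q * m)) (q * p)) \<subseteq> Pi_set M x q"
    by (intro UN_least Pi_set_refinement_subset)
next
  show "Pi_set M x q \<subseteq> (\<Union>j<p. Pi_set M (x + j * (q * m)) (q * p))"
  proof
    fix y assume "y \<in> Pi_set M x q"
    then have "y < M" and "[int x = int y] (mod int q)"
      by (auto simp: mem_Pi_set_iff cong_int_iff cong_sym_eq)
    then obtain t where t: "int y = int x + int q * t"
      by (auto simp: cong_iff_lin)
    obtain u where u: "[int m * u = 1] (mod int p)"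
      using cong_solve_coprime_int[of "int m" "int p"] \<open>coprime p m\<close>
      by (auto simp: coprime_commute)
    \<comment> \<open>\<open>j\<close> is \<open>t / m\<close> modulo \<open>p\<close>\<close>
    define j where "j = nat ((t * u) mod int p)"
    have "j < p" using \<open>0 < p\<close> by (simp add: j_def nat_less_iff)
    have "[int j * int m = t * u * int m] (mod int p)"
      using \<open>0 < p\<close> by (intro cong_scalar_right) (simp add: j_def)
    also have "[t * u * int m = t * 1] (mod int p)"
      using cong_scalar_left[OF u, of t] by (simp add: ac_simps)
    finally have "[int q * (int j * int m) = int q * t] (mod int q * int p)"
      by (simp add: cong_cmult_leftI)
    then have "[int (x + j * (q * m)) = int y] (mod int (q * p))"
      using t by (simp add: ac_simps cong_add_lcancel)
    then have "[x + j * (q * m) = y] (mod q * p)"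
      by (simp only: cong_int_iff)
    then have "y \<in> Pi_set M (x + j * (q * m)) (q * p)"
      using \<open>y < M\<close> by (simp add: mem_Pi_set_iff cong_sym_eq)
    then show "y \<in> (\<Union>j<p. Pi_set M (x + j * (q * m)) (q * p))"
      using \<open>j < p\<close> by blast
  qed
qed

lemma Pi_set_refinement_disjoint:
  assumes "0 < q" "coprime p m" "i < p" "j < p" "i \<noteq> j"
  shows "Pi_set M (x + i * (q * m)) (q * p) \<inter> Pi_set M (x + j * (q * m)) (q * p) = {}"
proof -
  have "\<not> [x + i * (q * m) = x + j * (q * m)] (mod q * p)"
  proof
    assume "[x + i * (q * m) = x + j * (q * m)] (mod q * p)"
    then have "[q * (i * m) = q * (j * m)] (mod q * p)"
      by (simp add: cong_add_lcancel_nat ac_simps)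
    then have "[i * m = j * m] (mod p)"
      using \<open>0 < q\<close> by (simp add: cong_def)
    then have "[i = j] (mod p)"
      using \<open>coprime p m\<close> by (simp add: cong_mult_rcancel_nat coprime_commute)
    then show False
      using assms(3-5) cong_less_modulus_unique_nat by blast
  qed
  then show ?thesis
    by (auto simp: mem_Pi_set_iff) (meson cong_sym cong_trans)
qed

lemma power_cong_root_of_unity:
  fixes z :: "'a::monoid_mult"
  assumes "z ^ N = 1" "[x = y] (mod N)"
  shows "z ^ x = z ^ y"
proof -
  have "z ^ k = z ^ (k mod N)" for k
  proof -
    have "z ^ k = z ^ (N * (k div N) + k mod N)" by simp
    also have "\<dots> = z ^ (k mod N)"
      by (simp only: power_add power_mult assms(1) power_one mult.left_neutral)
    finally show ?thesis .
  qed
  then show ?thesis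
    using assms(2) unfolding cong_def by metis
qed

lemma poly_mask_poly: "poly (mask_poly Y) z = (\<Sum>y\<in>Y. z ^ y)"
  by (simp add: mask_poly_def poly_sum poly_monom)

lemma sum_Pi_set_refinement:
  assumes "0 < p" "0 < q" "coprime p m"
  shows "(\<Sum>y \<in> A \<inter> Pi_set M x q. f y) =
    (\<Sum>j<p. \<Sum>y \<in> A \<inter> Pi_set M (x + j * (q * m)) (q * p). f y)"
proof -
  have U: "A \<inter> Pi_set M x q = (\<Union>j<p. A \<inter> Pi_set M (x + j * (q * m)) (q * p))"
    by (subst Pi_set_eq_UN_refinement[OF assms(1,3)]) blast
  have disjoint: "(A \<inter> Pi_set M (x + i * (q * m)) (q * p)) \<inter> (A \<inter> Pi_set M (x + j * (q * m)) (q * p)) = {}"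
    if "i < p" "j < p" "i \<noteq> j" for i j
    using Pi_set_refinement_disjoint[OF assms(2,3) that] by blast
  show ?thesis
    unfolding U by (rule sum.UNION_disjoint) (simp, simp, use disjoint in blast)
qed

lemma sum_powers_root_of_unity:
  fixes w :: "'a::field"
  assumes "w ^ p = 1" "w \<noteq> 1"
  shows "(\<Sum>j<p. w ^ j) = 0"
  using geometric_sum[OF assms(2), of p] assms(1) by simp

lemma poly_mask_poly_equidistributed_eq_0:
  fixes z :: complex
  assumes "0 < p" "0 < q" "coprime p m" "z ^ (q * p) = 1" "z ^ (q * m) \<noteq> 1"
    and equi: "\<And>j. j < p \<Longrightarrow> card (A \<inter> Pi_set M (x + j * (q * m)) (q * p)) = c"
  shows "poly (mask_poly (A \<inter> Pi_set M x q)) z = 0"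
proof -
  have power_eq: "z ^ y = z ^ x * (z ^ (q * m)) ^ j" if "y \<in> Pi_set M (x + j * (q * m)) (q * p)" for y j
  proof -
    have "z ^ y = z ^ (x + j * (q * m))"
      using that power_cong_root_of_unity[OF \<open>z ^ (q * p) = 1\<close>] by (simp add: mem_Pi_set_iff)
    then show ?thesis
      by (simp add: power_add power_mult mult.commute[of j])
  qed
  have "(\<Sum>y \<in> A \<inter> Pi_set M (x + j * (q * m)) (q * p). z ^ y) = of_nat c * (z ^ x * (z ^ (q * m)) ^ j)"
    if "j < p" for j
  proof -
    have "(\<Sum>y \<in> A \<inter> Pi_set M (x + j * (q * m)) (q * p). z ^ y) =
        (\<Sum>y \<in> A \<inter> Pi_set M (x + j * (q * m)) (q * p). z ^ x * (z ^ (q * m)) ^ j)"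
      using power_eq by (intro sum.cong) auto
    then show ?thesis
      using equi[OF that] by simp
  qed
  then have "poly (mask_poly (A \<inter> Pi_set M x q)) z = (\<Sum>j<p. of_nat c * (z ^ x * (z ^ (q * m)) ^ j))"
    unfolding poly_mask_poly sum_Pi_set_refinement[OF assms(1-3)] by simp
  also have "\<dots> = of_nat c * z ^ x * (\<Sum>j<p. (z ^ (q * m)) ^ j)"
    by (simp add: sum_distrib_left mult.assoc)
  also have "(\<Sum>j<p. (z ^ (q * m)) ^ j) = 0"
  proof (rule sum_powers_root_of_unity)
    have "(z ^ (q * m)) ^ p = (z ^ (q * p)) ^ m"
      by (simp only: power_mult[symmetric] ac_simps)
    then show "(z ^ (q * m)) ^ p = 1"
      using \<open>z ^ (q * p) = 1\<close> by simp
  qed (rule \<open>z ^ (q * m) \<noteq> 1\<close>)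
  finally show ?thesis by simp
qed

lemma cis_root_power_eq_1_iff:
  assumes "0 < n" "coprime k n"
  shows "cis (2 * pi * real k / real n) ^ t = 1 \<longleftrightarrow> n dvd t"
proof -
  have "cis (2 * pi * real k / real n) ^ t = cis (2 * pi * real (k * t) / real n)"
    unfolding Complex.DeMoivre by (simp add: mult_ac)
  also have "\<dots> = exp (2 * of_real pi * \<i> * of_nat (k * t) / of_nat n)"
    by (simp add: cis_conv_exp mult_ac)
  also have "\<dots> = 1 \<longleftrightarrow> n dvd k * t"
    using assms(1) by (intro complex_root_unity_eq_1) simp
  also have "\<dots> \<longleftrightarrow> n dvd t"
    using assms(2) by (simp add: coprime_commute coprime_dvd_mult_right_iff)
  finally show ?thesis .
qed

lemma prod_linear_factors_dvd:
  fixes f :: "'b \<Rightarrow> 'a::idom"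
  assumes "finite S" "inj_on f S" "\<And>k. k \<in> S \<Longrightarrow> poly P (f k) = 0"
  shows "(\<Prod>k\<in>S. [:- f k, 1:]) dvd P"
  using assms
proof (induction S arbitrary: P rule: finite_induct)
  case empty
  then show ?case by simp
next
  case (insert x S)
  obtain Q where Q: "P = [:- f x, 1:] * Q"
    using insert.prems(2) by (meson dvdE insertI1 poly_eq_0_iff_dvd)
  have "poly Q (f k) = 0" if "k \<in> S" for k
  proof -
    have "f k \<noteq> f x"
      using insert.prems(1) insert.hyps(2) that by (metis inj_onD insertCI)
    then show ?thesis
      using insert.prems(2)[of k] that Q by simp
  qed
  then have "(\<Prod>k\<in>S. [:- f k, 1:]) dvd Q"
    using insert.IH insert.prems(1) by (simp add: inj_on_insert)
  then show ?case
    unfolding Q prod.insert[OF insert.hyps] by (rule mult_dvd_mono[OF dvd_refl])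
qed

lemma cyclotomic_dvd:
  assumes "0 < n" "\<And>k. k < n \<Longrightarrow> coprime k n \<Longrightarrow> poly P (cis (2 * pi * real k / real n)) = 0"
  shows "cyclotomic n dvd P"
  unfolding cyclotomic_def
proof (rule prod_linear_factors_dvd)
  show "inj_on (\<lambda>k. cis (2 * pi * real k / real n)) {k. k < n \<and> coprime k n}"
    using Complex.bij_betw_roots_unity[OF \<open>0 < n\<close>] by (auto simp: bij_betw_def lessThan_def elim: inj_on_subset)
qed (use assms in auto)

lemma cyclotomic_dvd_mask_poly_equidistributed:
  assumes "1 < p" "0 < q" "coprime p m"
    and "\<And>j. j < p \<Longrightarrow> card (A \<inter> Pi_set M (x + j * (q * m)) (q * p)) = c"
  shows "cyclotomic (q * p) dvd mask_poly (A \<inter> Pi_set M x q)"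
proof (rule cyclotomic_dvd)
  show "0 < q * p" using assms(1,2) by simp
  fix k assume "coprime k (q * p)"
  define z where "z = cis (2 * pi * real k / real (q * p))"
  have "\<not> p dvd m"
    using assms(1,3) coprime_absorb_left by fastforce
  then have "\<not> q * p dvd q * m"
    using \<open>0 < q\<close> by simp
  then have "z ^ (q * p) = 1" "z ^ (q * m) \<noteq> 1"
    using cis_root_power_eq_1_iff[OF \<open>0 < q * p\<close> \<open>coprime k (q * p)\<close>] by (simp_all add: z_def)
  moreover have "0 < p" using assms(1) by simp
  ultimately show "poly (mask_poly (A \<inter> Pi_set M x q)) z = 0"
    using poly_mask_poly_equidistributed_eq_0[OF _ \<open>0 < q\<close> \<open>coprime p m\<close> _ _ assms(4)]
    by (simp add: z_def)
qed

lemma div_prime_multiplicity_decompose: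
  fixes p M :: nat
  assumes "prime p" "p dvd M" "0 < M"
  obtains m where "M div p = p ^ (multiplicity p M - 1) * m" "coprime p m"
    and "p ^ multiplicity p M = p ^ (multiplicity p M - 1) * p"
proof -
  have "1 < p" using \<open>prime p\<close> prime_gt_1_nat by blast
  obtain m where M: "M = p ^ multiplicity p M * m" and "\<not> p dvd m"
    using multiplicity_decompose'[of M p] assms(3) \<open>1 < p\<close> by auto
  have "multiplicity p M \<noteq> 0"
    using assms by (simp add: prime_multiplicity_gt_zero_iff)
  then have pn: "p ^ multiplicity p M = p ^ (multiplicity p M - 1) * p"
    by (simp add: power_eq_if)
  show thesis
  proof
    show "M div p = p ^ (multiplicity p M - 1) * m"
      using \<open>1 < p\<close> by (subst M) (simp add: pn)
    show "coprime p m"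
      using \<open>prime p\<close> \<open>\<not> p dvd m\<close> by (simp add: prime_imp_coprime_nat)
  qed (rule pn)
qed

theorem lemma4p8:
  fixes M p a0 :: nat and A B :: "nat set"
  assumes "M \<ge> 1"
    and "prime p" and "p dvd M"
    and "tiling M A B"
    and "0 \<in> B"
    and "a0 \<in> A"
    and "\<forall>a \<in> A \<inter> Pi_set M a0 (p ^ (multiplicity p M - 1)).
           splits_BA M A B p (multiplicity p M) (fiber M p a)"
  shows "(\<forall>\<nu> \<in> {1..p - 1}.
            card (A \<inter> Pi_set M a0 (p ^ multiplicity p M)) =
            card (A \<inter> Pi_set M ((a0 + \<nu> * (M div p)) mod M) (p ^ multiplicity p M)))
         \<and> cyclotomic (p ^ multiplicity p M) dvd
             mask_poly (A \<inter> Pi_set M a0 (p ^ (multiplicity p M - 1)))"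
proof -
  define n where "n = multiplicity p M"
  define q where "q = p ^ (n - 1)"
  have "1 < p"
    using \<open>prime p\<close> prime_gt_1_nat by blast
  then have "0 < q"
    by (simp add: q_def)
  obtain m where D: "M div p = q * m" and "coprime p m" and pn: "p ^ n = q * p"
    using div_prime_multiplicity_decompose[of p M] assms(1-3) unfolding n_def q_def by auto
  have "p ^ n dvd M"
    unfolding n_def by (rule multiplicity_dvd)
  have "\<forall>a \<in> A \<inter> Pi_set M a0 q. splits_BA M A B p n (fiber M p a)"
    using assms(7) by (simp add: n_def q_def)
  then have "\<forall>a \<in> A \<inter> Pi_set M (a0 + j * (M div p)) (p ^ n). splits_BA M A B p n (fiber M p a)" for j
    using Pi_set_refinement_subset[of M a0 j q m p] unfolding D pn by blast
  then have equi: "card (A \<inter> Pi_set M (a0 + j * (M div p)) (p ^ n)) = card (A \<inter> Pi_set M a0 (p ^ n))"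
    if "j \<le> p" for j
    using card_Pi_set_shift_eq[OF assms(4,5) \<open>1 < p\<close> assms(3) \<open>p ^ n dvd M\<close>] that by blast
  show ?thesis
    unfolding n_def[symmetric] q_def[symmetric]
  proof (intro conjI ballI)
    fix \<nu> assume "\<nu> \<in> {1..p - 1}"
    then have "\<nu> \<le> p" by auto
    then show "card (A \<inter> Pi_set M a0 (p ^ n)) = card (A \<inter> Pi_set M ((a0 + \<nu> * (M div p)) mod M) (p ^ n))"
      using equi Pi_set_mod[OF \<open>p ^ n dvd M\<close>] by simp
  next
    show "cyclotomic (p ^ n) dvd mask_poly (A \<inter> Pi_set M a0 q)"
      unfolding pn using \<open>1 < p\<close> \<open>0 < q\<close> \<open>coprime p m\<close>
    proof (rule cyclotomic_dvd_mask_poly_equidistributed)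
      fix j assume "j < p"
      then show "card (A \<inter> Pi_set M (a0 + j * (q * m)) (q * p)) = card (A \<inter> Pi_set M a0 (p ^ n))"
        using equi[of j] by (simp add: D pn)
    qed
  qed
qed

end
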